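(* Fix an arbitrary execution of Algorithm $\mathrm{tree}(G)$ on $G$, and let $r$, $U$ and $F$ be as defined in the context. If $uv$ is an edge of $G$ with $u\in U$ and $d_F(v)=1$, then $r(u)>r(v)$.
   Context: $G$ is a finite connected simple undirected graph containing a vertex $a$ with $d_G(a)\ge 2$. For a subtree $T$ of $G$ and a vertex $u$ of $T$: - $V_T(u)$ is the set of vertices $v\in V(G)\setminus V(T)$ with $uv\in E(G)$. - $E_T(u)$ is the set of edges $uv$ of $G$ with $v\in V_T(u)$. - If $|V_T(u)|=1$, then $v_T(u)$ denotes the unique vertex of $V_T(u)$. Three sets of vertices of $T$ are defined: - $W_2(T)=\{u\in V(T): |V_T(u)|\ge 2\}$. - $W_1(T)=\{u\in V(T): |V_T(u)|=1,\ |V_{T\cup E_T(u)}(v_T(u))|\ge 2\}$. - $W_0(T)=\{u\in V(T): |V_T(u)|=1,\ |V_{T\cup E_T(u)}(v_T(u))|\le 1\}$. Algorithm $\mathrm{tree}(G)$ runs as follows. 1. Start with $T=\{a\}$. 2. While $V(T)\ne V(G)$: - If $W_2(T)\ne\emptyset$, pick an arbitrary $u\in W_2(T)$. - Else, if $W_1(T)\neq\emptyset$, pick an arbitrary $u\in W_1(T)$. - Else, let $u$ be the vertex of $W_0(T)$ that joined $V(T)$ most recently. - Set $T:=T\cup E_T(u)$ ("expand $T$ at $u$"). 3. Return $T$. Now fix an execution and let $T$ be the returned spanning tree, rooted at $a$. For $v\ne a$, let $p(v)$ be the parent of $v$ in $T$. For each vertex $u$ with $d_T(u)\ge 2$, let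 $T_u$ be the tree just before the (unique) expansion at $u$. The rank $r:V(G)\to\mathbb{Z}$ is defined by $r(a)=1$ and, for each edge $uv$ of $T$ with $u=p(v)$: - $r(v)=r(u)$ if $u\in W_2(T_u)$; - $r(v)=1+\max_{w\in V(T_u)} r(w)$ otherwise. $U$ is the set of vertices $v$ such that no other vertex has rank $r(v)$. $F$ is the spanning forest obtained from $T$ by deleting every edge $uv$ with $r(u)\ne r(v)$, and $d_F(v)$ denotes the degree of $v$ in $F$. *)

theory Defs
  imports Main
begin

definition simple_graph :: "'a set \<Rightarrow> ('a \<Rightarrow> 'a \<Rightarrow> bool) \<Rightarrow> bool" where
  "simple_graph V E \<longleftrightarrow> finite V \<and> (\<forall>u v. E u v \<longrightarrow> u \<in> V \<and> v \<in> V)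
     \<and> (\<forall>u v. E u v \<longrightarrow> E v u) \<and> (\<forall>u. \<not> E u u)"

definition graph_connected :: "'a set \<Rightarrow> ('a \<Rightarrow> 'a \<Rightarrow> bool) \<Rightarrow> bool" where
  "graph_connected V E \<longleftrightarrow> V \<noteq> {} \<and> (\<forall>u\<in>V. \<forall>v\<in>V. E\<^sup>*\<^sup>* u v)"

text \<open>V_T(u), where S is the vertex set of the current tree T.\<close>
definition Vout :: "'a set \<Rightarrow> ('a \<Rightarrow> 'a \<Rightarrow> bool) \<Rightarrow> 'a set \<Rightarrow> 'a \<Rightarrow> 'a set" where
  "Vout V E S u = {v \<in> V. v \<notin> S \<and> E u v}"

definition W2 :: "'a set \<Rightarrow> ('a \<Rightarrow> 'a \<Rightarrow> bool) \<Rightarrow> 'a set \<Rightarrow> 'a set" where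
  "W2 V E S = {u \<in> S. card (Vout V E S u) \<ge> 2}"

definition W1 :: "'a set \<Rightarrow> ('a \<Rightarrow> 'a \<Rightarrow> bool) \<Rightarrow> 'a set \<Rightarrow> 'a set" where
  "W1 V E S = {u \<in> S. card (Vout V E S u) = 1 \<and>
     card (Vout V E (S \<union> Vout V E S u) (the_elem (Vout V E S u))) \<ge> 2}"

definition W0 :: "'a set \<Rightarrow> ('a \<Rightarrow> 'a \<Rightarrow> bool) \<Rightarrow> 'a set \<Rightarrow> 'a set" where
  "W0 V E S = {u \<in> S. card (Vout V E S u) = 1 \<and>
     card (Vout V E (S \<union> Vout V E S u) (the_elem (Vout V E S u))) \<le> 1}"

text \<open>An execution is recorded as the list us of vertices at which the tree was
  expanded, in order. tstate V E a us i is the vertex set of the tree after the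
  first i expansions (so tstate ... 0 = {a}).\<close>
definition tstate :: "'a set \<Rightarrow> ('a \<Rightarrow> 'a \<Rightarrow> bool) \<Rightarrow> 'a \<Rightarrow> 'a list \<Rightarrow> nat \<Rightarrow> 'a set" where
  "tstate V E a us i = foldl (\<lambda>S u. S \<union> Vout V E S u) {a} (take i us)"

definition jtime :: "'a set \<Rightarrow> ('a \<Rightarrow> 'a \<Rightarrow> bool) \<Rightarrow> 'a \<Rightarrow> 'a list \<Rightarrow> 'a \<Rightarrow> nat" where
  "jtime V E a us x = (LEAST j. x \<in> tstate V E a us j)"

definition valid_exec :: "'a set \<Rightarrow> ('a \<Rightarrow> 'a \<Rightarrow> bool) \<Rightarrow> 'a \<Rightarrow> 'a list \<Rightarrow> bool" where
  "valid_exec V E a us \<longleftrightarrow>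
     (\<forall>i < length us. let S = tstate V E a us i; u = us ! i in
        S \<noteq> V \<and>
        (if W2 V E S \<noteq> {} then u \<in> W2 V E S
         else if W1 V E S \<noteq> {} then u \<in> W1 V E S
         else u \<in> W0 V E S \<and> (\<forall>w \<in> W0 V E S. jtime V E a us w \<le> jtime V E a us u)))
     \<and> tstate V E a us (length us) = V"

definition tree_edge :: "'a set \<Rightarrow> ('a \<Rightarrow> 'a \<Rightarrow> bool) \<Rightarrow> 'a \<Rightarrow> 'a list \<Rightarrow> 'a \<Rightarrow> 'a \<Rightarrow> bool" where
  "tree_edge V E a us x y \<longleftrightarrow> (\<exists>i < length us.
      (x = us ! i \<and> y \<in> Vout V E (tstate V E a us i) x) \<or>
      (y = us ! i \<and> x \<in> Vout V E (tstate V E a us i) y))"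

text \<open>r is the rank function of the execution (the defining equations determine it uniquely).\<close>
definition is_rank :: "'a set \<Rightarrow> ('a \<Rightarrow> 'a \<Rightarrow> bool) \<Rightarrow> 'a \<Rightarrow> 'a list \<Rightarrow> ('a \<Rightarrow> int) \<Rightarrow> bool" where
  "is_rank V E a us r \<longleftrightarrow> r a = 1 \<and>
     (\<forall>i < length us. \<forall>v \<in> Vout V E (tstate V E a us i) (us ! i).
        r v = (if us ! i \<in> W2 V E (tstate V E a us i) then r (us ! i)
               else 1 + Max (r ` tstate V E a us i)))"

definition rankU :: "'a set \<Rightarrow> ('a \<Rightarrow> int) \<Rightarrow> 'a set" where
  "rankU V r = {v \<in> V. \<forall>w \<in> V. w \<noteq> v \<longrightarrow> r w \<noteq> r v}"

text \<open>Degree in the forest F (tree edges joining vertices of equal rank).\<close>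
definition degF :: "'a set \<Rightarrow> ('a \<Rightarrow> 'a \<Rightarrow> bool) \<Rightarrow> 'a \<Rightarrow> 'a list \<Rightarrow> ('a \<Rightarrow> int) \<Rightarrow> 'a \<Rightarrow> nat" where
  "degF V E a us r v = card {w \<in> V. tree_edge V E a us v w \<and> r w = r v}"

end

theory Submission
  imports Defs
begin

(* A vertex u of unique rank is never involved in an expansion at a vertex of W2, since
   such an expansion gives the expanded vertex and its children the same rank. So u entered
   the tree as the only child of an expansion performed while W2 was empty, with a rank
   exceeding those of all vertices already present; this settles every neighbour v of u
   that was in the tree before u.
   Otherwise v becomes the only child of u in the very next expansion: W2 is still empty,
   W1 can contain at most u, and among the vertices of W0 u joined most recently. Then either
   v has at least two outside neighbours, lies alone in W2 and is expanded immediately, so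
   d_F(v) >= 2; or v never enters W2, has a rank above that of its parent u, and is
   isolated in F. *)

lemma tstate_0 [simp]: "tstate V E a us 0 = {a}"
  by (simp add: tstate_def)

lemma tstate_Suc:
  "i < length us \<Longrightarrow> tstate V E a us (Suc i) = tstate V E a us i \<union> Vout V E (tstate V E a us i) (us ! i)"
  by (simp add: tstate_def take_Suc_conv_app_nth)

lemma tstate_beyond: "length us \<le> i \<Longrightarrow> tstate V E a us i = tstate V E a us (length us)"
  by (simp add: tstate_def)

lemma mono_tstate: "mono (tstate V E a us)"
proof (rule mono_iff_le_Suc[THEN iffD2], intro allI)
  fix i
  show "tstate V E a us i \<subseteq> tstate V E a us (Suc i)"
  proof (cases "i < length us")
    case False
    then show ?thesis using tstate_beyond[of us i] tstate_beyond[of us "Suc i"] by simp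
  qed (auto simp: tstate_Suc)
qed

lemma Vout_antimono: "S \<subseteq> S' \<Longrightarrow> Vout V E S' x \<subseteq> Vout V E S x"
  by (auto simp: Vout_def)

lemma finite_Vout: "finite V \<Longrightarrow> finite (Vout V E S x)"
  by (simp add: Vout_def)

lemma card_Vout_antimono: "finite V \<Longrightarrow> S \<subseteq> S' \<Longrightarrow> card (Vout V E S' x) \<le> card (Vout V E S x)"
  by (simp add: card_mono finite_Vout Vout_antimono)

lemma W2_subset_added:
  assumes "finite V" "W2 V E S = {}" "S \<subseteq> S'"
  shows "W2 V E S' \<subseteq> S' - S"
proof
  fix w assume w: "w \<in> W2 V E S'"
  show "w \<in> S' - S"
  proof
    show "w \<notin> S"
    proof
      assume "w \<in> S"
      with \<open>W2 V E S = {}\<close> have "card (Vout V E S w) < 2" by (auto simp: W2_def)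
      with w card_Vout_antimono[OF assms(1,3), where E = E and x = w] show False by (auto simp: W2_def)
    qed
  qed (use w in \<open>simp add: W2_def\<close>)
qed

lemma W1_subset_added:
  assumes fin: "finite V" and "W2 V E S = {}" "W1 V E S = {}" and "S \<subseteq> S'"
  shows "W1 V E S' \<subseteq> S' - S"
proof
  fix w assume w: "w \<in> W1 V E S'"
  then have card1: "card (Vout V E S' w) = 1"
    and card2: "2 \<le> card (Vout V E (S' \<union> Vout V E S' w) (the_elem (Vout V E S' w)))"
    by (auto simp: W1_def)
  show "w \<in> S' - S"
  proof (rule ccontr)
    assume "w \<notin> S' - S"
    with w have "w \<in> S" by (auto simp: W1_def)
    with \<open>W2 V E S = {}\<close> have "card (Vout V E S w) \<le> card (Vout V E S' w)"
      using card1 by (auto simp: W2_def)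
    then have same: "Vout V E S' w = Vout V E S w"
      using card_seteq[OF finite_Vout[OF fin] Vout_antimono[OF \<open>S \<subseteq> S'\<close>]] by blast
    then have "S \<union> Vout V E S w \<subseteq> S' \<union> Vout V E S' w"
      using \<open>S \<subseteq> S'\<close> by auto
    from card_Vout_antimono[OF fin this, where E = E and x = "the_elem (Vout V E S' w)"] card2 same
    have "w \<in> W1 V E S"
      using \<open>w \<in> S\<close> card1 by (auto simp: W1_def)
    with \<open>W1 V E S = {}\<close> show False by simp
  qed
qed

locale tree_execution =
  fixes V :: "'a set" and E :: "'a \<Rightarrow> 'a \<Rightarrow> bool" and a :: 'a and us :: "'a list"
  assumes graph: "simple_graph V E" and valid: "valid_exec V E a us"
begin

abbreviation T :: "nat \<Rightarrow> 'a set" where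
  "T \<equiv> tstate V E a us"

lemma finite_V: "finite V"
  using graph by (simp add: simple_graph_def)

lemma edge_in_V: "E x y \<Longrightarrow> x \<in> V \<and> y \<in> V"
  using graph by (simp add: simple_graph_def)

lemma T_final: "length us \<le> i \<Longrightarrow> T i = V"
  using valid tstate_beyond[of us i] by (simp add: valid_exec_def)

lemma T_mono: "i \<le> j \<Longrightarrow> T i \<subseteq> T j"
  by (rule monoD[OF mono_tstate])

lemma T_subset_V: "T i \<subseteq> V"
  using T_mono[of i "max i (length us)"] T_final[of "max i (length us)"] by simp

lemma finite_T: "finite (T i)"
  using finite_subset[OF T_subset_V finite_V] .

lemma expansion_rule:
  assumes "i < length us"
  shows "if W2 V E (T i) \<noteq> {} then us ! i \<in> W2 V E (T i)
    else if W1 V E (T i) \<noteq> {} then us ! i \<in> W1 V E (T i)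
    else us ! i \<in> W0 V E (T i) \<and> (\<forall>w \<in> W0 V E (T i). jtime V E a us w \<le> jtime V E a us (us ! i))"
  using valid assms unfolding valid_exec_def Let_def by blast

lemma expansion_in_W2: "i < length us \<Longrightarrow> W2 V E (T i) \<noteq> {} \<Longrightarrow> us ! i \<in> W2 V E (T i)"
  using expansion_rule by auto

lemma expansion_in_W1:
  "i < length us \<Longrightarrow> W2 V E (T i) = {} \<Longrightarrow> W1 V E (T i) \<noteq> {} \<Longrightarrow> us ! i \<in> W1 V E (T i)"
  using expansion_rule by auto

lemma expansion_in_W0:
  "i < length us \<Longrightarrow> W2 V E (T i) = {} \<Longrightarrow> W1 V E (T i) = {} \<Longrightarrow>
    us ! i \<in> W0 V E (T i) \<and> (\<forall>w \<in> W0 V E (T i). jtime V E a us w \<le> jtime V E a us (us ! i))"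
  using expansion_rule by auto

lemma expansion_in_T: "i < length us \<Longrightarrow> us ! i \<in> T i"
  using expansion_rule[of i] by (auto simp: W2_def W1_def W0_def split: if_split_asm)

lemma expansion_not_in_W2:
  assumes "i < length us" "us ! i \<notin> W2 V E (T i)"
  shows "W2 V E (T i) = {}" "card (Vout V E (T i) (us ! i)) = 1"
proof -
  show "W2 V E (T i) = {}"
    using expansion_in_W2 assms by blast
  then show "card (Vout V E (T i) (us ! i)) = 1"
    using expansion_in_W1 expansion_in_W0 assms by (cases "W1 V E (T i) = {}") (auto simp: W1_def W0_def)
qed

lemma Vout_nonempty_imp_less_length: "Vout V E (T i) x \<noteq> {} \<Longrightarrow> i < length us"
  using T_final[of i] by (force simp: Vout_def)

lemma T_Suc_singleton: "i < length us \<Longrightarrow> Vout V E (T i) (us ! i) = {x} \<Longrightarrow> T (Suc i) = insert x (T i)"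
  by (simp add: tstate_Suc)

lemma jtime_le: "x \<in> T i \<Longrightarrow> jtime V E a us x \<le> i"
  unfolding jtime_def by (rule Least_le)

lemma joins_at_expansion:
  assumes "x \<in> V" "x \<noteq> a"
  obtains i where "i < length us" "x \<in> Vout V E (T i) (us ! i)" "jtime V E a us x = Suc i"
proof -
  define m where "m = jtime V E a us x"
  have "x \<in> T m"
    unfolding m_def jtime_def by (rule LeastI[of _ "length us"]) (simp add: T_final assms(1))
  moreover have "m \<noteq> 0"
  proof
    assume "m = 0"
    with \<open>x \<in> T m\<close> assms(2) show False by simp
  qed
  then obtain i where m: "m = Suc i"
    using not0_implies_Suc by blast
  moreover have "x \<notin> T i"
    using jtime_le[of x i] m m_def by linarith
  moreover have "i < length us"
    using \<open>x \<notin> T i\<close> T_final[of i] assms(1) by (metis not_le)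
  ultimately show thesis
    using that[of i] tstate_Suc[of i us V E a] m_def by auto
qed

lemma parent_unique:
  assumes "i < length us" "j < length us"
    and "x \<in> Vout V E (T i) (us ! i)" "x \<in> Vout V E (T j) (us ! j)"
  shows "i = j"
proof (rule ccontr)
  have later: False if "k < l" "l < length us" "x \<in> Vout V E (T k) (us ! k)" "x \<in> Vout V E (T l) (us ! l)"
    for k l
  proof -
    have "x \<in> T (Suc k)"
      using that tstate_Suc[of k us V E a] by auto
    moreover have "T (Suc k) \<subseteq> T l"
      using T_mono that(1) by simp
    ultimately show False
      using that(4) by (auto simp: Vout_def)
  qed
  assume "i \<noteq> j"
  then show False
    using later assms by (metis linorder_neqE_nat)
qed

lemma expansion_at_only_candidate:
  assumes "i < length us" "W2 V E (T i) = {}" "W1 V E (T i) \<subseteq> {x}"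
    and "x \<in> W1 V E (T i) \<union> W0 V E (T i)"
    and "\<And>y. y \<in> T i \<Longrightarrow> y \<noteq> x \<Longrightarrow> jtime V E a us y < jtime V E a us x"
  shows "us ! i = x"
proof (cases "W1 V E (T i) = {}")
  case True
  then have "us ! i \<in> W0 V E (T i)" "jtime V E a us x \<le> jtime V E a us (us ! i)"
    using expansion_in_W0 assms(1,2,4) by auto
  then show ?thesis
    using assms(5)[of "us ! i"] expansion_in_T[OF assms(1)] by fastforce
next
  case False
  then show ?thesis
    using expansion_in_W1 assms(1-3) by blast
qed

end

locale ranked_execution = tree_execution +
  fixes r :: "'a \<Rightarrow> int"
  assumes rank: "is_rank V E a us r"
begin

lemma rank_child:
  "i < length us \<Longrightarrow> y \<in> Vout V E (T i) (us ! i) \<Longrightarrow>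
    r y = (if us ! i \<in> W2 V E (T i) then r (us ! i) else 1 + Max (r ` T i))"
  using rank by (simp add: is_rank_def)

lemma rank_W2_child:
  "i < length us \<Longrightarrow> us ! i \<in> W2 V E (T i) \<Longrightarrow> y \<in> Vout V E (T i) (us ! i) \<Longrightarrow> r y = r (us ! i)"
  using rank_child by simp

lemma rank_child_gt:
  assumes "i < length us" "us ! i \<notin> W2 V E (T i)" "y \<in> Vout V E (T i) (us ! i)" "z \<in> T i"
  shows "r z < r y"
proof -
  have "r z \<le> Max (r ` T i)"
    using assms(4) finite_T by simp
  then show ?thesis
    using rank_child[OF assms(1,3)] assms(2) by simp
qed

lemma parent_of_rankU_not_W2:
  assumes "x \<in> rankU V r" "i < length us" "x \<in> Vout V E (T i) (us ! i)"
  shows "us ! i \<notin> W2 V E (T i)"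
proof
  assume "us ! i \<in> W2 V E (T i)"
  then have "r (us ! i) = r x"
    using rank_W2_child assms(2,3) by simp
  moreover have "us ! i \<in> V" "us ! i \<noteq> x"
    using expansion_in_T[OF assms(2)] T_subset_V assms(3) by (auto simp: Vout_def)
  ultimately show False
    using assms(1) by (auto simp: rankU_def)
qed

lemma rankU_not_expanded_in_W2:
  assumes "us ! i \<in> rankU V r" "i < length us"
  shows "us ! i \<notin> W2 V E (T i)"
proof
  assume W2: "us ! i \<in> W2 V E (T i)"
  then have "Vout V E (T i) (us ! i) \<noteq> {}"
    by (auto simp: W2_def)
  then obtain y where y: "y \<in> Vout V E (T i) (us ! i)"
    by blast
  then have "r y = r (us ! i)"
    using rank_W2_child assms(2) W2 by simp
  moreover have "y \<in> V" "y \<noteq> us ! i"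
    using y expansion_in_T[OF assms(2)] by (auto simp: Vout_def)
  ultimately show False
    using assms(1) by (auto simp: rankU_def)
qed

lemma root_not_rankU:
  assumes "2 \<le> card {w \<in> V. E a w}"
  shows "a \<notin> rankU V r"
proof
  assume a: "a \<in> rankU V r"
  have irrefl: "\<not> E a a"
    using graph by (simp add: simple_graph_def)
  then have Vout_root: "Vout V E (T 0) a = {w \<in> V. E a w}"
    by (auto simp: Vout_def)
  then have "a \<in> W2 V E (T 0)"
    using assms by (simp add: W2_def)
  moreover have "0 < length us"
    using Vout_nonempty_imp_less_length[of 0 a] Vout_root assms by (metis card.empty not_numeral_le_zero)
  ultimately have "us ! 0 \<in> W2 V E (T 0)"
    using expansion_in_W2 by blast
  moreover have "us ! 0 = a"
    using expansion_in_T[OF \<open>0 < length us\<close>] by simp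
  ultimately show False
    using rankU_not_expanded_in_W2[of 0] a \<open>0 < length us\<close> by simp
qed

lemma degF_ge_card_W2:
  assumes "i < length us" "us ! i \<in> W2 V E (T i)"
  shows "card (Vout V E (T i) (us ! i)) \<le> degF V E a us r (us ! i)"
  unfolding degF_def
proof (rule card_mono)
  show "finite {w \<in> V. tree_edge V E a us (us ! i) w \<and> r w = r (us ! i)}"
    using finite_V by simp
  show "Vout V E (T i) (us ! i) \<subseteq> {w \<in> V. tree_edge V E a us (us ! i) w \<and> r w = r (us ! i)}"
    using rank_W2_child[OF assms] assms(1) by (auto simp: tree_edge_def Vout_def)
qed

lemma degF_eq_0:
  assumes "j < length us" "x \<in> Vout V E (T j) (us ! j)" "r (us ! j) \<noteq> r x"
    and "card (Vout V E (T (Suc j)) x) \<le> 1"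
  shows "degF V E a us r x = 0"
proof -
  have "{w \<in> V. tree_edge V E a us x w \<and> r w = r x} = {}"
  proof (intro equals0I)
    fix w assume "w \<in> {w \<in> V. tree_edge V E a us x w \<and> r w = r x}"
    then obtain k where k: "k < length us" and same_rank: "r w = r x" and
      edge: "(x = us ! k \<and> w \<in> Vout V E (T k) x) \<or> (w = us ! k \<and> x \<in> Vout V E (T k) w)"
      unfolding tree_edge_def by blast
    from edge show False
    proof
      assume "x = us ! k \<and> w \<in> Vout V E (T k) x"
      then have x: "x = us ! k" and w: "w \<in> Vout V E (T k) (us ! k)"
        by auto
      have "x \<in> T k"
        using expansion_in_T[OF k] x by simp
      then have "Suc j \<le> k"
        using T_mono[of k j] assms(2) by (force simp: Vout_def)
      then have "card (Vout V E (T k) x) \<le> 1"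
        using card_Vout_antimono[OF finite_V T_mono] assms(4) order_trans by blast
      then have "us ! k \<notin> W2 V E (T k)"
        using x by (simp add: W2_def)
      then show False
        using rank_child_gt[OF k _ w \<open>x \<in> T k\<close>] same_rank by simp
    next
      assume "w = us ! k \<and> x \<in> Vout V E (T k) w"
      then show False
        using parent_unique[OF assms(1) k assms(2)] same_rank assms(3) by auto
    qed
  qed
  then show ?thesis
    unfolding degF_def by (simp only: card.empty)
qed

lemma rankU_joins_alone:
  assumes "u \<in> rankU V r" "u \<noteq> a"
  obtains i where "i < length us" "W2 V E (T i) = {}" "Vout V E (T i) (us ! i) = {u}"
    "jtime V E a us u = Suc i" "\<And>z. z \<in> T i \<Longrightarrow> r z < r u"
proof -
  have "u \<in> V"
    using assms(1) by (simp add: rankU_def)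
  then obtain i where i: "i < length us" and u: "u \<in> Vout V E (T i) (us ! i)"
    and "jtime V E a us u = Suc i"
    using joins_at_expansion assms(2) by blast
  moreover have not_W2: "us ! i \<notin> W2 V E (T i)"
    using parent_of_rankU_not_W2[OF assms(1) i u] .
  moreover have "Vout V E (T i) (us ! i) = {u}"
    using expansion_not_in_W2[OF i not_W2] u by (metis card_1_singletonE singletonD)
  ultimately show thesis
    using that expansion_not_in_W2 rank_child_gt by blast
qed

lemma rankU_expanded_next:
  assumes u: "u \<in> rankU V r" and "E u v" and i: "i < length us"
    and W2: "W2 V E (T i) = {}" and joins: "Vout V E (T i) (us ! i) = {u}"
    and jtime: "jtime V E a us u = Suc i" and v: "v \<notin> T (Suc i)"
  shows "Suc i < length us" "us ! Suc i = u" "W2 V E (T (Suc i)) = {}"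
    "Vout V E (T (Suc i)) u = {v}"
proof -
  have T_Suc: "T (Suc i) = insert u (T i)"
    using T_Suc_singleton[OF i joins] .
  have v_out: "v \<in> Vout V E (T (Suc i)) u"
    using v \<open>E u v\<close> edge_in_V by (simp add: Vout_def)
  then show i': "Suc i < length us"
    using Vout_nonempty_imp_less_length by blast
  have "W2 V E (T (Suc i)) \<subseteq> {u}"
    using W2_subset_added[OF finite_V W2, of "T (Suc i)"] T_Suc by auto
  moreover have "u \<notin> W2 V E (T (Suc i))"
  proof
    assume "u \<in> W2 V E (T (Suc i))"
    with calculation have "us ! Suc i = u"
      using expansion_in_W2[OF i'] by blast
    with \<open>u \<in> W2 V E (T (Suc i))\<close> show False
      using rankU_not_expanded_in_W2[OF _ i'] u by simp
  qed
  ultimately show W2': "W2 V E (T (Suc i)) = {}"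
    by blast
  have "card (Vout V E (T (Suc i)) u) \<le> Suc 0"
    using \<open>u \<notin> W2 V E (T (Suc i))\<close> T_Suc by (simp add: W2_def)
  then show Vout_u: "Vout V E (T (Suc i)) u = {v}"
    using v_out card_le_Suc0_iff_eq[OF finite_Vout[OF finite_V]] by blast
  have "us ! i \<notin> W1 V E (T i)"
    using Vout_u joins T_Suc by (simp add: W1_def)
  then have "W1 V E (T i) = {}"
    using expansion_in_W1[OF i W2] by blast
  then have "W1 V E (T (Suc i)) \<subseteq> {u}"
    using W1_subset_added[OF finite_V W2, of "T (Suc i)"] T_Suc by auto
  moreover have "u \<in> W1 V E (T (Suc i)) \<union> W0 V E (T (Suc i))"
    using Vout_u T_Suc by (auto simp: W1_def W0_def)
  moreover have "jtime V E a us y < jtime V E a us u" if "y \<in> T (Suc i)" "y \<noteq> u" for y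
    using jtime_le[of y i] that T_Suc jtime by simp
  ultimately show "us ! Suc i = u"
    using expansion_at_only_candidate[OF i' W2'] by blast
qed

lemma degF_late_neighbour_of_rankU:
  assumes "u \<in> rankU V r" "E u v" "i < length us" "W2 V E (T i) = {}"
    "Vout V E (T i) (us ! i) = {u}" "jtime V E a us u = Suc i" "v \<notin> T (Suc i)"
  shows "degF V E a us r v \<noteq> 1"
proof -
  note next_step = rankU_expanded_next[OF assms]
  have T_Suc_Suc: "T (Suc (Suc i)) = insert v (T (Suc i))"
    using T_Suc_singleton[OF next_step(1)] next_step(2,4) by simp
  show ?thesis
  proof (cases "2 \<le> card (Vout V E (T (Suc (Suc i))) v)")
    case True
    then have v_W2: "v \<in> W2 V E (T (Suc (Suc i)))"
      using T_Suc_Suc by (simp add: W2_def)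
    moreover have "W2 V E (T (Suc (Suc i))) \<subseteq> {v}"
      using W2_subset_added[OF finite_V next_step(3), of "T (Suc (Suc i))"] T_Suc_Suc by auto
    moreover have i'': "Suc (Suc i) < length us"
      using Vout_nonempty_imp_less_length[of "Suc (Suc i)" v] True by (metis card.empty not_numeral_le_zero)
    ultimately have "us ! Suc (Suc i) = v"
      using expansion_in_W2 by blast
    then have "2 \<le> degF V E a us r v"
      using degF_ge_card_W2[OF i''] v_W2 True by fastforce
    then show ?thesis
      by simp
  next
    case False
    have "r u < r v"
      using rank_child_gt[OF next_step(1) _ _ expansion_in_T[OF next_step(1)]] next_step(2-4) by simp
    then show ?thesis
      using degF_eq_0[OF next_step(1)] next_step(2,4) False by simp
  qed
qed

end

theorem lemma4:
  fixes V :: "'a set" and E :: "'a \<Rightarrow> 'a \<Rightarrow> bool" and a :: 'a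
    and us :: "'a list" and r :: "'a \<Rightarrow> int" and u v :: 'a
  assumes "simple_graph V E" and "graph_connected V E"
    and "a \<in> V" and "card {w \<in> V. E a w} \<ge> 2"
    and "valid_exec V E a us"
    and "is_rank V E a us r"
    and "E u v" and "u \<in> rankU V r" and "degF V E a us r v = 1"
  shows "r u > r v"
proof -
  interpret ranked_execution V E a us r
    using assms by (simp add: ranked_execution_def tree_execution_def ranked_execution_axioms_def)
  have "u \<noteq> a"
    using root_not_rankU assms(4,8) by blast
  then obtain i where i: "i < length us" "W2 V E (T i) = {}" "Vout V E (T i) (us ! i) = {u}"
    "jtime V E a us u = Suc i" and earlier: "\<And>z. z \<in> T i \<Longrightarrow> r z < r u"
    using rankU_joins_alone assms(8) by metis
  have "v \<in> T (Suc i)"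
    using degF_late_neighbour_of_rankU[OF assms(8,7) i] assms(9) by blast
  moreover have "v \<noteq> u"
    using assms(1,7) by (auto simp: simple_graph_def)
  ultimately show ?thesis
    using earlier T_Suc_singleton[OF i(1,3)] by simp
qed

end
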